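(* For any integer $m\ge1$ there exist $\varepsilon>0$ small enough and $b\in\mathbb{R}$ such that, on $I(m,\varepsilon)$, $N(f_2+bf_3)=1$, where $f_2,f_3$ are the second and third eigenfunctions of the Laplacian.
   Context: $I(m,\varepsilon)$ is the metric graph with vertices $v_1,v_2,v_3,v_4$, an edge $e_1$ of length $1/2$ from $v_1$ to $v_2$, an edge $e_2$ of length $1/2$ from $v_3$ to $v_4$, and $m$ parallel edges of length $\varepsilon$ joining $v_2$ and $v_3$. The Laplacian $-\frac{d^2}{dx^2}$ acts edgewise with Dirichlet conditions at $v_1,v_4$ and Neumann–Kirchhoff conditions (continuity and vanishing sum of outgoing derivatives) at $v_2,v_3$; eigenvalues are ordered increasingly with multiplicity, with $L^2$-orthogonal eigenfunctions $f_1,f_2,\dots$. $N(f)$ is the number of zeroes of $f$ other than at $v_1,v_4$. *)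

theory Defs
  imports "HOL-Analysis.Analysis"
begin

text \<open>Edges are indexed by natural numbers:
  edge 0 = e1, parametrised by [0,1/2], from v1 (x=0) to v2 (x=1/2);
  edge 1 = e2, parametrised by [0,1/2], from v3 (x=0) to v4 (x=1/2);
  edges 2..m+1 = the m parallel edges, parametrised by [0,eps], from v2 (x=0) to v3 (x=eps).
  A function on the graph is f :: nat => real => real, f j x being its value at
  parameter x on edge j; it is required to vanish off the graph.\<close>

definition edge_len :: "real \<Rightarrow> nat \<Rightarrow> real" where
  "edge_len eps j = (if j < 2 then 1/2 else eps)"

definition is_edge :: "nat \<Rightarrow> nat \<Rightarrow> bool" where
  "is_edge m j \<longleftrightarrow> j < m + 2"

text \<open>Eigenfunction of -d^2/dx^2 with eigenvalue lam (possibly zero function):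
  edgewise C^2 solution of -f'' = lam f, Dirichlet at v1, v4, continuity and
  Kirchhoff (sum of outgoing derivatives = 0) at v2, v3.\<close>
definition eigen_fun :: "nat \<Rightarrow> real \<Rightarrow> real \<Rightarrow> (nat \<Rightarrow> real \<Rightarrow> real) \<Rightarrow> bool" where
  "eigen_fun m eps lam f \<longleftrightarrow>
     (\<forall>j x. \<not> (is_edge m j \<and> x \<in> {0..edge_len eps j}) \<longrightarrow> f j x = 0) \<and>
     (\<exists>g :: nat \<Rightarrow> real \<Rightarrow> real.
        (\<forall>j. is_edge m j \<longrightarrow> (\<forall>x\<in>{0..edge_len eps j}.
            (f j has_real_derivative g j x) (at x within {0..edge_len eps j}) \<and>
            (g j has_real_derivative (- lam * f j x)) (at x within {0..edge_len eps j}))) \<and>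
        \<comment> \<open>Dirichlet at v1 and v4\<close>
        f 0 0 = 0 \<and> f 1 (1/2) = 0 \<and>
        \<comment> \<open>continuity at v2 and v3\<close>
        (\<forall>j. 2 \<le> j \<and> j < m + 2 \<longrightarrow> f j 0 = f 0 (1/2) \<and> f j eps = f 1 0) \<and>
        \<comment> \<open>Kirchhoff at v2 and v3 (outgoing derivatives)\<close>
        - g 0 (1/2) + (\<Sum>j=2..<m+2. g j 0) = 0 \<and>
        g 1 0 + (\<Sum>j=2..<m+2. - g j eps) = 0)"

definition multiplicity :: "nat \<Rightarrow> real \<Rightarrow> real \<Rightarrow> nat" where
  "multiplicity m eps lam = Sup {k. \<exists>g :: nat \<Rightarrow> nat \<Rightarrow> real \<Rightarrow> real.
      (\<forall>i<k. eigen_fun m eps lam (g i)) \<and>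
      (\<forall>c :: nat \<Rightarrow> real. (\<forall>j x. (\<Sum>i<k. c i * g i j x) = 0) \<longrightarrow> (\<forall>i<k. c i = 0))}"

definition eig_count :: "nat \<Rightarrow> real \<Rightarrow> real \<Rightarrow> nat" where
  "eig_count m eps lam = (\<Sum>mu\<in>{mu. mu \<le> lam \<and> 0 < multiplicity m eps mu}. multiplicity m eps mu)"

text \<open>k-th eigenvalue (k >= 1), ordered increasingly with multiplicity.\<close>
definition eigenvalue :: "nat \<Rightarrow> real \<Rightarrow> nat \<Rightarrow> real" where
  "eigenvalue m eps k = Inf {lam. k \<le> eig_count m eps lam}"

definition L2_inner :: "nat \<Rightarrow> real \<Rightarrow> (nat \<Rightarrow> real \<Rightarrow> real) \<Rightarrow> (nat \<Rightarrow> real \<Rightarrow> real) \<Rightarrow> real" where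
  "L2_inner m eps f g = (\<Sum>j<m+2. integral {0..edge_len eps j} (\<lambda>x. f j x * g j x))"

definition first_three_eigenfunctions :: "nat \<Rightarrow> real \<Rightarrow> (nat \<Rightarrow> real \<Rightarrow> real) \<Rightarrow>
    (nat \<Rightarrow> real \<Rightarrow> real) \<Rightarrow> (nat \<Rightarrow> real \<Rightarrow> real) \<Rightarrow> bool" where
  "first_three_eigenfunctions m eps f1 f2 f3 \<longleftrightarrow>
     eigen_fun m eps (eigenvalue m eps 1) f1 \<and> f1 \<noteq> (\<lambda>j x. 0) \<and>
     eigen_fun m eps (eigenvalue m eps 2) f2 \<and> f2 \<noteq> (\<lambda>j x. 0) \<and>
     eigen_fun m eps (eigenvalue m eps 3) f3 \<and> f3 \<noteq> (\<lambda>j x. 0) \<and>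
     L2_inner m eps f1 f2 = 0 \<and> L2_inner m eps f1 f3 = 0 \<and> L2_inner m eps f2 f3 = 0"

text \<open>Points of the graph other than v1, v4: the vertices v2, v3 and interior
  points of edges.\<close>
datatype gpoint = V2 | V3 | EdgePt nat real

definition zero_points :: "nat \<Rightarrow> real \<Rightarrow> (nat \<Rightarrow> real \<Rightarrow> real) \<Rightarrow> gpoint set" where
  "zero_points m eps f =
     {p. p = V2 \<and> f 0 (1/2) = 0} \<union> {p. p = V3 \<and> f 1 0 = 0} \<union>
     {EdgePt j x | j x. is_edge m j \<and> 0 < x \<and> x < edge_len eps j \<and> f j x = 0}"

text \<open>N(f): number of zeros other than at v1, v4 (card of an infinite set is 0,
  so N f = 1 means exactly one zero).\<close>
definition num_zeros :: "nat \<Rightarrow> real \<Rightarrow> (nat \<Rightarrow> real \<Rightarrow> real) \<Rightarrow> nat" where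
  "num_zeros m eps f = card (zero_points m eps f)"

end

theory Submission
  imports Defs
begin

text \<open>On every edge an eigenfunction for \<open>\<lambda> = k\<^sup>2 > 0\<close> is a combination of \<open>cos (k x)\<close> and
  \<open>sin (k x)\<close>. For \<open>\<lambda> \<le> 0\<close> the flux \<open>f f'\<close> increases from \<open>v\<^sub>1\<close> to \<open>v\<^sub>4\<close> and vanishes at both
  ends, so there is no eigenfunction. For \<open>\<lambda> = k\<^sup>2\<close> with \<open>sin (k eps) \<noteq> 0\<close>, the Dirichlet
  condition at \<open>v\<^sub>1\<close>, continuity and Kirchhoff's law fix the eigenfunction up to a factor, and
  the Dirichlet condition at \<open>v\<^sub>4\<close> becomes the secular equation
  \<open>sym_factor (k/2) * anti_factor (k/2) = 0\<close>. For \<open>eps \<le> 1/(40 m)\<close> its first three roots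
  \<open>t\<^sub>1 < t\<^sub>2 < t\<^sub>3\<close> lie in \<open>(0, \<pi>/2)\<close>, \<open>(3\<pi>/4, \<pi>)\<close>, \<open>(5\<pi>/4, 3\<pi>/2)\<close> and are simple,
  so \<open>\<lambda>\<^sub>i = (2 t\<^sub>i)\<^sup>2\<close>. With \<open>b = - sin t\<^sub>2 / sin t\<^sub>3\<close> the combination \<open>f\<^sub>2 + b f\<^sub>3\<close> vanishes
  at \<open>v\<^sub>2\<close>, and elementary estimates on each edge (monotonicity and concavity of \<open>sin\<close> on \<open>e\<^sub>1\<close>, \<open>e\<^sub>2\<close>;
  Jordan's inequality and the shortness of the bridges) show that it has no other zero.\<close>

definition helmholtz :: "real \<Rightarrow> real \<Rightarrow> (real \<Rightarrow> real) \<Rightarrow> (real \<Rightarrow> real) \<Rightarrow> bool" where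
  "helmholtz lam L f g \<longleftrightarrow> (\<forall>x\<in>{0..L}.
     (f has_real_derivative g x) (at x within {0..L}) \<and>
     (g has_real_derivative (- lam * f x)) (at x within {0..L}))"

lemma helmholtzD:
  assumes "helmholtz lam L f g" "x \<in> {0..L}"
  shows "(f has_real_derivative g x) (at x within {0..L})"
    and "(g has_real_derivative (- lam * f x)) (at x within {0..L})"
  using assms unfolding helmholtz_def by auto

lemma nondecreasing_by_derivative_within:
  fixes f d :: "real \<Rightarrow> real"
  assumes der: "\<And>x. x \<in> {a..b} \<Longrightarrow> (f has_real_derivative d x) (at x within {a..b})"
    and nonneg: "\<And>x. x \<in> {a..b} \<Longrightarrow> 0 \<le> d x" and "a \<le> x" "x \<le> y" "y \<le> b"
  shows "f x \<le> f y"
proof -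
  have "(f has_derivative (*) (d z)) (at z within {x..y})" if "x \<le> z" "z \<le> y" for z
  proof -
    have "(f has_real_derivative d z) (at z within {x..y})"
      by (rule DERIV_subset[OF der]) (use assms(3-5) that in auto)
    then show ?thesis unfolding has_field_derivative_def by simp
  qed
  from mvt_very_simple[OF \<open>x \<le> y\<close> this]
  obtain z where "z \<in> {x..y}" "f y - f x = d z * (y - x)" by blast
  moreover have "0 \<le> d z * (y - x)"
    using nonneg[of z] \<open>z \<in> {x..y}\<close> assms(3-5) by simp
  ultimately show ?thesis by simp
qed

lemma helmholtz_pos_solution:
  assumes k: "0 < k" and h: "helmholtz (k^2) L f g" and x: "x \<in> {0..L}"
  shows "f x = f 0 * cos (k*x) + g 0 / k * sin (k*x)"
    and "g x = - f 0 * k * sin (k*x) + g 0 * cos (k*x)"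
proof -
  define u where "u x = f x - (f 0 * cos (k*x) + g 0 / k * sin (k*x))" for x
  define v where "v x = g x - (- f 0 * k * sin (k*x) + g 0 * cos (k*x))" for x
  \<comment> \<open>The energy of the difference to the explicit solution is conserved and vanishes at 0.\<close>
  have energy: "((\<lambda>x. k^2 * (u x)^2 + (v x)^2) has_real_derivative 0) (at y within {0..L})"
    if "y \<in> {0..L}" for y
  proof -
    have "(u has_real_derivative v y) (at y within {0..L})"
      unfolding u_def v_def using helmholtzD(1)[OF h that] k
      by (auto intro!: derivative_eq_intros simp: field_simps)
    moreover have "(v has_real_derivative (- (k^2) * u y)) (at y within {0..L})"
      unfolding u_def v_def using helmholtzD(2)[OF h that] k
      by (auto intro!: derivative_eq_intros simp: field_simps power2_eq_square)
    ultimately show ?thesis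
      by (auto intro!: derivative_eq_intros simp: field_simps power2_eq_square)
  qed
  have "\<exists>c. \<forall>y\<in>{0..L}. k^2 * (u y)^2 + (v y)^2 = c"
    by (rule has_field_derivative_zero_constant) (auto intro: energy)
  then obtain c where "\<forall>y\<in>{0..L}. k^2 * (u y)^2 + (v y)^2 = c" ..
  moreover have "0 \<in> {0..L}" using x by simp
  ultimately have "k^2 * (u x)^2 + (v x)^2 = 0" using x by (force simp: u_def v_def)
  then have "u x = 0" "v x = 0" using k by (simp_all add: add_nonneg_eq_0_iff)
  then show "f x = f 0 * cos (k*x) + g 0 / k * sin (k*x)"
    and "g x = - f 0 * k * sin (k*x) + g 0 * cos (k*x)"
    by (simp_all add: u_def v_def)
qed

lemma helmholtz_nonpos_product_mono:
  assumes lam: "lam \<le> 0" and h: "helmholtz lam L f g" and "0 \<le> x" "x \<le> y" "y \<le> L"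
  shows "f x * g x \<le> f y * g y"
proof (rule nondecreasing_by_derivative_within[where a = 0 and b = L and f = "\<lambda>x. f x * g x" and d = "\<lambda>x. (g x)^2 - lam * (f x)^2"])
  fix z assume z: "z \<in> {0..L}"
  show "((\<lambda>x. f x * g x) has_real_derivative (g z)^2 - lam * (f z)^2) (at z within {0..L})"
    using helmholtzD[OF h z]
    by (auto intro!: derivative_eq_intros simp: power2_eq_square algebra_simps)
  show "0 \<le> (g z)^2 - lam * (f z)^2"
    using mult_nonpos_nonneg[OF lam zero_le_power2[of "f z"]] zero_le_power2[of "g z"] by linarith
qed (use assms in auto)

lemma helmholtz_nonpos_square_const:
  assumes lam: "lam \<le> 0" and h: "helmholtz lam L f g"
    and "f 0 * g 0 = 0" "f L * g L = 0" and x: "x \<in> {0..L}" and y: "y \<in> {0..L}"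
  shows "(f x)^2 = (f y)^2"
proof -
  have square: "((\<lambda>x. (f x)^2) has_real_derivative 0) (at z within {0..L})" if z: "z \<in> {0..L}" for z
  proof -
    have "f z * g z = 0"
      using helmholtz_nonpos_product_mono[OF lam h, of 0 z]
        helmholtz_nonpos_product_mono[OF lam h, of z L] z assms(3,4) by auto
    then show ?thesis
      using helmholtzD(1)[OF h z] by (auto intro!: derivative_eq_intros)
  qed
  have "\<exists>c. \<forall>z\<in>{0..L}. (f z)^2 = c"
    by (rule has_field_derivative_zero_constant) (auto intro: square)
  then obtain c where "\<forall>z\<in>{0..L}. (f z)^2 = c" ..
  then show ?thesis using x y by simp
qed

lemma helmholtz_green:
  assumes "0 \<le> L" and "lam \<noteq> mu" and hf: "helmholtz lam L f g" and hh: "helmholtz mu L h q"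
  shows "integral {0..L} (\<lambda>x. f x * h x) =
     ((g L * h L - f L * q L) - (g 0 * h 0 - f 0 * q 0)) / (mu - lam)"
proof -
  define W where "W x = g x * h x - f x * q x" for x
  have "(W has_vector_derivative ((mu - lam) * (f x * h x))) (at x within {0..L})"
    if "x \<in> {0..L}" for x
  proof -
    have "(W has_real_derivative ((mu - lam) * (f x * h x))) (at x within {0..L})"
      unfolding W_def using helmholtzD[OF hf that] helmholtzD[OF hh that]
      by (auto intro!: derivative_eq_intros simp: algebra_simps)
    then show ?thesis by (simp add: has_real_derivative_iff_has_vector_derivative)
  qed
  from fundamental_theorem_of_calculus[OF \<open>0 \<le> L\<close> this]
  have "((\<lambda>x. (mu - lam) * (f x * h x)) has_integral (W L - W 0)) {0..L}" by simp
  from has_integral_mult_right[OF this, of "1 / (mu - lam)"]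
  have "((\<lambda>x. f x * h x) has_integral ((W L - W 0) / (mu - lam))) {0..L}"
    using \<open>lam \<noteq> mu\<close> by simp
  then show ?thesis unfolding W_def by (rule integral_unique)
qed

lemma eigen_funE:
  assumes "eigen_fun m eps lam f"
  obtains g where "\<And>j x. \<not> (is_edge m j \<and> x \<in> {0..edge_len eps j}) \<Longrightarrow> f j x = 0"
    and "\<And>j. j < m + 2 \<Longrightarrow> helmholtz lam (edge_len eps j) (f j) (g j)"
    and "helmholtz lam (1/2) (f 0) (g 0)" and "helmholtz lam (1/2) (f 1) (g 1)"
    and "\<And>j. j \<in> {2..<m+2} \<Longrightarrow> helmholtz lam eps (f j) (g j)"
    and "f 0 0 = 0" and "f 1 (1/2) = 0"
    and "\<And>j. j \<in> {2..<m+2} \<Longrightarrow> f j 0 = f 0 (1/2)"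
    and "\<And>j. j \<in> {2..<m+2} \<Longrightarrow> f j eps = f 1 0"
    and "g 0 (1/2) = (\<Sum>j=2..<m+2. g j 0)"
    and "g 1 0 = (\<Sum>j=2..<m+2. g j eps)"
proof -
  obtain g where
    off: "\<forall>j x. \<not> (is_edge m j \<and> x \<in> {0..edge_len eps j}) \<longrightarrow> f j x = 0" and
    der: "\<forall>j. is_edge m j \<longrightarrow> (\<forall>x\<in>{0..edge_len eps j}.
            (f j has_real_derivative g j x) (at x within {0..edge_len eps j}) \<and>
            (g j has_real_derivative (- lam * f j x)) (at x within {0..edge_len eps j}))" and
    dirichlet: "f 0 0 = 0" "f 1 (1/2) = 0" and
    cont: "\<forall>j. 2 \<le> j \<and> j < m + 2 \<longrightarrow> f j 0 = f 0 (1/2) \<and> f j eps = f 1 0" and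
    kirchhoff: "- g 0 (1/2) + (\<Sum>j=2..<m+2. g j 0) = 0" "g 1 0 + (\<Sum>j=2..<m+2. - g j eps) = 0"
    using assms unfolding eigen_fun_def by blast
  have edge: "helmholtz lam (edge_len eps j) (f j) (g j)" if "j < m + 2" for j
    using der that unfolding helmholtz_def is_edge_def by blast
  show ?thesis
  proof (rule that[of g])
    show "helmholtz lam (1/2) (f 0) (g 0)" "helmholtz lam (1/2) (f 1) (g 1)"
      using edge[of 0] edge[of 1] by (simp_all add: edge_len_def)
    show "helmholtz lam eps (f j) (g j)" if "j \<in> {2..<m+2}" for j
      using edge[of j] that by (simp add: edge_len_def)
    show "g 0 (1/2) = (\<Sum>j=2..<m+2. g j 0)" "g 1 0 = (\<Sum>j=2..<m+2. g j eps)"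
      using kirchhoff by (simp_all add: sum_negf)
  qed (use off edge dirichlet cont in auto)
qed

lemma graph_pointE:
  assumes "is_edge m j \<and> x \<in> {0..edge_len eps j}"
  obtains "j = 0" "x \<in> {0..1/2}" | "j = 1" "x \<in> {0..1/2}" | "j \<in> {2..<m+2}" "x \<in> {0..eps}"
proof (cases "j = 0 \<or> j = 1")
  case True
  then show ?thesis using assms that by (auto simp: edge_len_def)
next
  case False
  then show ?thesis using assms that by (auto simp: is_edge_def edge_len_def)
qed

lemma eigen_fun_nonpos_eq_0:
  assumes ef: "eigen_fun m eps lam f" and lam: "lam \<le> 0" and eps: "0 < eps"
  shows "f = (\<lambda>j x. 0)"
proof -
  obtain g where off: "\<And>j x. \<not> (is_edge m j \<and> x \<in> {0..edge_len eps j}) \<Longrightarrow> f j x = 0"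
    and h0: "helmholtz lam (1/2) (f 0) (g 0)" and h1: "helmholtz lam (1/2) (f 1) (g 1)"
    and hj: "\<And>j. j \<in> {2..<m+2} \<Longrightarrow> helmholtz lam eps (f j) (g j)"
    and dir: "f 0 0 = 0" "f 1 (1/2) = 0"
    and cont: "\<And>j. j \<in> {2..<m+2} \<Longrightarrow> f j 0 = f 0 (1/2)" "\<And>j. j \<in> {2..<m+2} \<Longrightarrow> f j eps = f 1 0"
    and kir: "g 0 (1/2) = (\<Sum>j=2..<m+2. g j 0)" "g 1 0 = (\<Sum>j=2..<m+2. g j eps)"
    by (rule eigen_funE[OF ef]) blast
  \<comment> \<open>\<open>f g\<close> increases along every edge from \<open>v\<^sub>1\<close> to \<open>v\<^sub>4\<close> and Kirchhoff's law passes the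
      total flux through \<open>v\<^sub>2\<close> and \<open>v\<^sub>3\<close>.\<close>
  have flux_v2_nonneg: "0 \<le> f 0 (1/2) * g 0 (1/2)"
    using helmholtz_nonpos_product_mono[OF lam h0, of 0 "1/2"] dir by simp
  have flux_v2_split: "f 0 (1/2) * g 0 (1/2) = (\<Sum>j=2..<m+2. f j 0 * g j 0)"
    unfolding kir sum_distrib_left by (intro sum.cong) (auto simp: cont)
  have flux_bridges_mono: "(\<Sum>j=2..<m+2. f j 0 * g j 0) \<le> (\<Sum>j=2..<m+2. f j eps * g j eps)"
    by (intro sum_mono helmholtz_nonpos_product_mono[OF lam hj]) (use eps in auto)
  have flux_v3_join: "(\<Sum>j=2..<m+2. f j eps * g j eps) = f 1 0 * g 1 0"
    unfolding kir sum_distrib_left by (intro sum.cong) (auto simp: cont)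
  have flux_v3_nonpos: "f 1 0 * g 1 0 \<le> 0"
    using helmholtz_nonpos_product_mono[OF lam h1, of 0 "1/2"] dir by simp
  from flux_v2_nonneg flux_v2_split flux_bridges_mono flux_v3_join flux_v3_nonpos
  have z0: "f 0 (1/2) * g 0 (1/2) = 0" and z1: "f 1 0 * g 1 0 = 0"
    by linarith+
  have e1: "f 0 x = 0" if "x \<in> {0..1/2}" for x
    using helmholtz_nonpos_square_const[OF lam h0 _ z0 that, where y = 0] dir by simp
  have e2: "f 1 x = 0" if "x \<in> {0..1/2}" for x
    using helmholtz_nonpos_square_const[OF lam h1 z1 _ that, where y = "1/2"] dir by simp
  have bridge: "f j x = 0" if "j \<in> {2..<m+2}" "x \<in> {0..eps}" for j x
  proof -
    have "f j 0 = 0" "f j eps = 0" using cont[OF that(1)] e1[of "1/2"] e2[of 0] by auto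
    then show ?thesis
      using helmholtz_nonpos_square_const[OF lam hj[OF that(1)] _ _ that(2), where y = 0] eps
      by simp
  qed
  show ?thesis
  proof (intro ext)
    fix j x
    show "f j x = 0"
    proof (cases "is_edge m j \<and> x \<in> {0..edge_len eps j}")
      case True
      then show ?thesis by (rule graph_pointE) (use e1 e2 bridge in simp_all)
    qed (use off in blast)
  qed
qed

lemma eigen_fun_orthogonal:
  assumes ef: "eigen_fun m eps lam f" and eh: "eigen_fun m eps mu h"
    and lm: "lam \<noteq> mu" and eps: "0 < eps"
  shows "L2_inner m eps f h = 0"
proof -
  obtain g where hf: "\<And>j. j < m + 2 \<Longrightarrow> helmholtz lam (edge_len eps j) (f j) (g j)"
    and dir_f: "f 0 0 = 0" "f 1 (1/2) = 0"
    and cont_f: "\<And>j. j \<in> {2..<m+2} \<Longrightarrow> f j 0 = f 0 (1/2)" "\<And>j. j \<in> {2..<m+2} \<Longrightarrow> f j eps = f 1 0"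
    and kir_f: "g 0 (1/2) = (\<Sum>j=2..<m+2. g j 0)" "g 1 0 = (\<Sum>j=2..<m+2. g j eps)"
    by (rule eigen_funE[OF ef]) blast
  obtain q where hh: "\<And>j. j < m + 2 \<Longrightarrow> helmholtz mu (edge_len eps j) (h j) (q j)"
    and dir_h: "h 0 0 = 0" "h 1 (1/2) = 0"
    and cont_h: "\<And>j. j \<in> {2..<m+2} \<Longrightarrow> h j 0 = h 0 (1/2)" "\<And>j. j \<in> {2..<m+2} \<Longrightarrow> h j eps = h 1 0"
    and kir_h: "q 0 (1/2) = (\<Sum>j=2..<m+2. q j 0)" "q 1 0 = (\<Sum>j=2..<m+2. q j eps)"
    by (rule eigen_funE[OF eh]) blast
  define W where "W j x = g j x * h j x - f j x * q j x" for j x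
  define B where "B j = W j (edge_len eps j) - W j 0" for j
  have "L2_inner m eps f h = (\<Sum>j<m+2. B j / (mu - lam))"
    unfolding L2_inner_def B_def W_def
    by (intro sum.cong refl helmholtz_green lm hf hh) (use eps in \<open>auto simp: edge_len_def\<close>)
  also have "\<dots> = (\<Sum>j<m+2. B j) / (mu - lam)" by (simp only: sum_divide_distrib)
  also have "(\<Sum>j<m+2. B j) = 0"
  proof -
    have "(\<Sum>j<m+2. B j) = B 0 + B 1 + (\<Sum>j=2..<m+2. B j)"
      using sum.atLeastLessThan_concat[of 0 2 "m+2" B]
      by (simp add: atLeast0LessThan numeral_2_eq_2)
    moreover have "(\<Sum>j=2..<m+2. B j) = (\<Sum>j=2..<m+2.
        h 1 0 * g j eps - f 1 0 * q j eps - h 0 (1/2) * g j 0 + f 0 (1/2) * q j 0)"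
      using cont_f cont_h by (intro sum.cong) (auto simp: B_def W_def edge_len_def)
    then have "(\<Sum>j=2..<m+2. B j) = h 1 0 * (\<Sum>j=2..<m+2. g j eps) - f 1 0 * (\<Sum>j=2..<m+2. q j eps)
        - h 0 (1/2) * (\<Sum>j=2..<m+2. g j 0) + f 0 (1/2) * (\<Sum>j=2..<m+2. q j 0)"
      by (simp only: sum.distrib sum_subtractf sum_distrib_left)
    moreover have "B 0 = h 0 (1/2) * g 0 (1/2) - f 0 (1/2) * q 0 (1/2)"
      using dir_f dir_h by (simp add: B_def W_def edge_len_def mult.commute)
    then have "B 0 = h 0 (1/2) * (\<Sum>j=2..<m+2. g j 0) - f 0 (1/2) * (\<Sum>j=2..<m+2. q j 0)"
      by (simp only: kir_f kir_h)
    moreover have "B 1 = f 1 0 * q 1 0 - h 1 0 * g 1 0"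
      using dir_f dir_h by (simp add: B_def W_def edge_len_def mult.commute)
    then have "B 1 = f 1 0 * (\<Sum>j=2..<m+2. q j eps) - h 1 0 * (\<Sum>j=2..<m+2. g j eps)"
      by (simp only: kir_f kir_h)
    ultimately show ?thesis by linarith
  qed
  finally show ?thesis by simp
qed

text \<open>\<open>wave m eps k\<close> solves \<open>-f'' = k\<^sup>2 f\<close> on \<open>I(m,eps)\<close> with \<open>f = sin (k x)\<close> on \<open>e\<^sub>1\<close> and
  satisfies all vertex conditions except the Dirichlet condition at \<open>v\<^sub>4\<close>, which reads
  \<open>secular m eps k = 0\<close>.\<close>

definition wave_cos_coeff :: "nat \<Rightarrow> real \<Rightarrow> real \<Rightarrow> real" where
  "wave_cos_coeff m eps k = sin (k/2) * cos (k*eps) + cos (k/2) * sin (k*eps) / real m"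

definition wave_sin_coeff :: "nat \<Rightarrow> real \<Rightarrow> real \<Rightarrow> real" where
  "wave_sin_coeff m eps k = cos (k/2) * cos (k*eps) - real m * sin (k/2) * sin (k*eps)"

definition secular :: "nat \<Rightarrow> real \<Rightarrow> real \<Rightarrow> real" where
  "secular m eps k = cos (k/2) * wave_cos_coeff m eps k + sin (k/2) * wave_sin_coeff m eps k"

definition wave_expr :: "nat \<Rightarrow> real \<Rightarrow> real \<Rightarrow> nat \<Rightarrow> real \<Rightarrow> real" where
  "wave_expr m eps k j x =
     (if j = 0 then sin (k*x)
      else if j = 1 then wave_cos_coeff m eps k * cos (k*x) + wave_sin_coeff m eps k * sin (k*x)
      else sin (k/2) * cos (k*x) + cos (k/2) / real m * sin (k*x))"

definition wave_expr_deriv :: "nat \<Rightarrow> real \<Rightarrow> real \<Rightarrow> nat \<Rightarrow> real \<Rightarrow> real" where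
  "wave_expr_deriv m eps k j x =
     (if j = 0 then k * cos (k*x)
      else if j = 1 then k * (- wave_cos_coeff m eps k * sin (k*x) + wave_sin_coeff m eps k * cos (k*x))
      else k * (- sin (k/2) * sin (k*x) + cos (k/2) / real m * cos (k*x)))"

definition wave :: "nat \<Rightarrow> real \<Rightarrow> real \<Rightarrow> nat \<Rightarrow> real \<Rightarrow> real" where
  "wave m eps k j x = (if is_edge m j \<and> x \<in> {0..edge_len eps j} then wave_expr m eps k j x else 0)"

lemma wave_e1: "x \<in> {0..1/2} \<Longrightarrow> wave m eps k 0 x = sin (k*x)"
  by (simp add: wave_def wave_expr_def is_edge_def edge_len_def)

lemma wave_e2: "x \<in> {0..1/2} \<Longrightarrow>
    wave m eps k 1 x = wave_cos_coeff m eps k * cos (k*x) + wave_sin_coeff m eps k * sin (k*x)"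
  by (simp add: wave_def wave_expr_def is_edge_def edge_len_def)

lemma wave_bridge: "j \<in> {2..<m+2} \<Longrightarrow> x \<in> {0..eps} \<Longrightarrow>
    wave m eps k j x = sin (k/2) * cos (k*x) + cos (k/2) / real m * sin (k*x)"
  by (simp add: wave_def wave_expr_def is_edge_def edge_len_def)

lemma wave_eigen_fun:
  assumes m: "1 \<le> m" and secular: "secular m eps k = 0" and eps: "0 \<le> eps"
  shows "eigen_fun m eps (k^2) (wave m eps k)"
  unfolding eigen_fun_def
proof (intro conjI exI[of _ "wave_expr_deriv m eps k"])
  show "\<forall>j x. \<not> (is_edge m j \<and> x \<in> {0..edge_len eps j}) \<longrightarrow> wave m eps k j x = 0"
    by (simp add: wave_def)
  show "\<forall>j. is_edge m j \<longrightarrow> (\<forall>x\<in>{0..edge_len eps j}.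
      (wave m eps k j has_real_derivative wave_expr_deriv m eps k j x) (at x within {0..edge_len eps j}) \<and>
      (wave_expr_deriv m eps k j has_real_derivative (- (k^2) * wave m eps k j x))
        (at x within {0..edge_len eps j}))"
  proof (intro allI impI ballI conjI)
    fix j x assume j: "is_edge m j" and x: "x \<in> {0..edge_len eps j}"
    have "(wave_expr m eps k j has_real_derivative wave_expr_deriv m eps k j x)
        (at x within {0..edge_len eps j})"
      unfolding wave_expr_def wave_expr_deriv_def using m
      by (auto intro!: derivative_eq_intros simp: algebra_simps)
    then show "(wave m eps k j has_real_derivative wave_expr_deriv m eps k j x)
        (at x within {0..edge_len eps j})"
      by (rule has_field_derivative_transform_within[OF _ zero_less_one x]) (use j in \<open>simp add: wave_def\<close>)
    have "(wave_expr_deriv m eps k j has_real_derivative (- (k^2) * wave_expr m eps k j x))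
        (at x within {0..edge_len eps j})"
      unfolding wave_expr_def wave_expr_deriv_def using m
      by (auto intro!: derivative_eq_intros simp: algebra_simps power2_eq_square)
    then show "(wave_expr_deriv m eps k j has_real_derivative (- (k^2) * wave m eps k j x))
        (at x within {0..edge_len eps j})"
      using j x by (simp add: wave_def)
  qed
  show "wave m eps k 0 0 = 0"
    by (simp add: wave_e1)
  show "wave m eps k 1 (1/2) = 0"
    using secular wave_e2[of "1/2" m eps k] by (simp add: secular_def algebra_simps)
  show "\<forall>j. 2 \<le> j \<and> j < m + 2 \<longrightarrow> wave m eps k j 0 = wave m eps k 0 (1/2) \<and> wave m eps k j eps = wave m eps k 1 0"
    using eps wave_e2[of 0 m eps k] by (auto simp: wave_e1 wave_bridge wave_cos_coeff_def)
  have "(\<Sum>j=2..<m+2. wave_expr_deriv m eps k j 0) = real m * (k * (cos (k/2) / real m))"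
    by (simp add: wave_expr_deriv_def)
  then show "- wave_expr_deriv m eps k 0 (1/2) + (\<Sum>j=2..<m+2. wave_expr_deriv m eps k j 0) = 0"
    using m by (simp add: wave_expr_deriv_def)
  have "(\<Sum>j=2..<m+2. - wave_expr_deriv m eps k j eps) =
      real m * (- (k * (- sin (k/2) * sin (k*eps) + cos (k/2) / real m * cos (k*eps))))"
    by (simp add: wave_expr_deriv_def)
  then show "wave_expr_deriv m eps k 1 0 + (\<Sum>j=2..<m+2. - wave_expr_deriv m eps k j eps) = 0"
    using m by (simp add: wave_expr_deriv_def wave_sin_coeff_def field_simps)
qed

lemma eigen_fun_eq_scaled_wave:
  assumes m: "1 \<le> m" and eps: "0 < eps" and k: "0 < k" and sn: "sin (k*eps) \<noteq> 0"
    and ef: "eigen_fun m eps (k^2) f"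
  obtains c where "f = (\<lambda>j x. c * wave m eps k j x)" and "c \<noteq> 0 \<Longrightarrow> secular m eps k = 0"
proof -
  obtain g where off: "\<And>j x. \<not> (is_edge m j \<and> x \<in> {0..edge_len eps j}) \<Longrightarrow> f j x = 0"
    and h0: "helmholtz (k^2) (1/2) (f 0) (g 0)" and h1: "helmholtz (k^2) (1/2) (f 1) (g 1)"
    and hj: "\<And>j. j \<in> {2..<m+2} \<Longrightarrow> helmholtz (k^2) eps (f j) (g j)"
    and dir: "f 0 0 = 0" "f 1 (1/2) = 0"
    and cont: "\<And>j. j \<in> {2..<m+2} \<Longrightarrow> f j 0 = f 0 (1/2)" "\<And>j. j \<in> {2..<m+2} \<Longrightarrow> f j eps = f 1 0"
    and kir: "g 0 (1/2) = (\<Sum>j=2..<m+2. g j 0)" "g 1 0 = (\<Sum>j=2..<m+2. g j eps)"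
    by (rule eigen_funE[OF ef]) blast
  define c where "c = g 0 0 / k"
  have e1: "f 0 x = c * sin (k*x)" if "x \<in> {0..1/2}" for x
    using helmholtz_pos_solution(1)[OF k h0 that] dir by (simp add: c_def)
  have g_v2: "g 0 (1/2) = c * k * cos (k/2)"
    using helmholtz_pos_solution(2)[OF k h0, of "1/2"] dir k by (simp add: c_def)
  define P where "P = c * sin (k/2)"
  have P: "f 0 (1/2) = P" using e1[of "1/2"] by (simp add: P_def)
  have bridge: "f j x = P * cos (k*x) + g j 0 / k * sin (k*x)"
      and bridge_deriv: "g j x = - P * k * sin (k*x) + g j 0 * cos (k*x)"
    if "j \<in> {2..<m+2}" "x \<in> {0..eps}" for j x
    using helmholtz_pos_solution[OF k hj[OF that(1)] that(2)] cont(1)[OF that(1)] P by auto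
  \<comment> \<open>As \<open>sin (k eps) \<noteq> 0\<close>, the value \<open>f 1 0\<close> at \<open>v\<^sub>3\<close> fixes the same initial slope on every bridge.\<close>
  define \<beta> where "\<beta> = (f 1 0 - P * cos (k*eps)) / sin (k*eps)"
  have slope: "g j 0 = k * \<beta>" if "j \<in> {2..<m+2}" for j
  proof -
    have "f 1 0 = P * cos (k*eps) + g j 0 / k * sin (k*eps)"
      using bridge[OF that, of eps] cont(2)[OF that] eps by simp
    then show ?thesis using sn k by (simp add: \<beta>_def field_simps)
  qed
  have "c * k * cos (k/2) = real m * (k * \<beta>)"
    using kir(1) g_v2 slope by simp
  then have \<beta>: "\<beta> = c * cos (k/2) / real m" using k m by (simp add: field_simps)
  have v3: "f 1 0 = c * wave_cos_coeff m eps k"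
  proof -
    have "f 1 0 = P * cos (k*eps) + \<beta> * sin (k*eps)" using sn by (simp add: \<beta>_def)
    then show ?thesis by (simp add: \<beta> P_def wave_cos_coeff_def algebra_simps)
  qed
  have "g 1 0 = (\<Sum>j=2..<m+2. - P * k * sin (k*eps) + k * \<beta> * cos (k*eps))"
    unfolding kir(2) using eps by (intro sum.cong) (simp_all add: bridge_deriv[where x = eps] slope)
  also have "\<dots> = k * c * wave_sin_coeff m eps k"
    using m by (simp add: \<beta> P_def wave_sin_coeff_def field_simps)
  finally have g_v3: "g 1 0 = k * c * wave_sin_coeff m eps k" .
  have e2: "f 1 x = c * (wave_cos_coeff m eps k * cos (k*x) + wave_sin_coeff m eps k * sin (k*x))"
    if "x \<in> {0..1/2}" for x
    using helmholtz_pos_solution(1)[OF k h1 that] v3 g_v3 k by (simp add: algebra_simps)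
  have "c * secular m eps k = f 1 (1/2)"
    using e2[of "1/2"] by (simp add: secular_def algebra_simps)
  then have "c \<noteq> 0 \<Longrightarrow> secular m eps k = 0" using dir by simp
  moreover have "f = (\<lambda>j x. c * wave m eps k j x)"
  proof (intro ext)
    fix j x
    show "f j x = c * wave m eps k j x"
    proof (cases "is_edge m j \<and> x \<in> {0..edge_len eps j}")
      case True
      then show ?thesis
      proof (cases rule: graph_pointE)
        case 3
        then show ?thesis
          using bridge[OF 3] slope[OF 3(1)] k by (simp add: wave_bridge P_def \<beta> algebra_simps)
      qed (use e1 e2 wave_e1 wave_e2 in simp_all)
    qed (use off in \<open>auto simp: wave_def\<close>)
  qed
  ultimately show ?thesis using that by blast
qed

lemma multiplicity_eqI:
  assumes "\<exists>g. (\<forall>i<n. eigen_fun m eps lam (g i)) \<and>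
      (\<forall>c :: nat \<Rightarrow> real. (\<forall>j x. (\<Sum>i<n. c i * g i j x) = 0) \<longrightarrow> (\<forall>i<n. c i = 0))"
    and "\<And>k g. \<forall>i<k. eigen_fun m eps lam (g i) \<Longrightarrow>
      \<forall>c :: nat \<Rightarrow> real. (\<forall>j x. (\<Sum>i<k. c i * g i j x) = 0) \<longrightarrow> (\<forall>i<k. c i = 0) \<Longrightarrow> k \<le> n"
  shows "multiplicity m eps lam = n"
  unfolding multiplicity_def by (rule cSup_eq_maximum) (use assms in auto)

lemma multiplicity_eq_0I:
  assumes "\<And>f. eigen_fun m eps lam f \<Longrightarrow> f = (\<lambda>j x. 0)"
  shows "multiplicity m eps lam = 0"
proof (rule multiplicity_eqI)
  fix k and g :: "nat \<Rightarrow> nat \<Rightarrow> real \<Rightarrow> real"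
  assume eig: "\<forall>i<k. eigen_fun m eps lam (g i)"
    and indep: "\<forall>c :: nat \<Rightarrow> real. (\<forall>j x. (\<Sum>i<k. c i * g i j x) = 0) \<longrightarrow> (\<forall>i<k. c i = 0)"
  show "k \<le> 0"
  proof (rule ccontr)
    assume "\<not> k \<le> 0"
    then have "g 0 = (\<lambda>j x. 0)" using assms eig by simp
    define c :: "nat \<Rightarrow> real" where "c i = (if i = 0 then 1 else 0)" for i
    have "(\<Sum>i<k. c i * g i j x) = 0" for j x
      using \<open>g 0 = (\<lambda>j x. 0)\<close> by (intro sum.neutral) (auto simp: c_def)
    then have "\<forall>i<k. c i = 0" using indep by blast
    then have "c 0 = 0" using \<open>\<not> k \<le> 0\<close> by simp
    then show False by (simp add: c_def)
  qed
qed simp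

lemma sum_lessThan_supported_01:
  fixes X :: "nat \<Rightarrow> real"
  assumes "1 < k" and "\<And>i. 1 < i \<Longrightarrow> c i = 0"
  shows "(\<Sum>i<k. c i * X i) = c 0 * X 0 + c 1 * X 1"
proof -
  have "(\<Sum>i<k. c i * X i) = (\<Sum>i\<in>{0,1}. c i * X i)"
    by (rule sum.mono_neutral_right) (use assms in auto)
  then show ?thesis by simp
qed

lemma multiplicity_eq_1I:
  assumes span: "\<And>f. eigen_fun m eps lam f \<Longrightarrow> \<exists>c. f = (\<lambda>j x. c * w j x)"
    and f0: "eigen_fun m eps lam f0" and nz: "f0 \<noteq> (\<lambda>j x. 0)"
  shows "multiplicity m eps lam = 1"
proof (rule multiplicity_eqI)
  obtain j0 x0 where "f0 j0 x0 \<noteq> 0" using nz by blast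
  then show "\<exists>g. (\<forall>i<1. eigen_fun m eps lam (g i)) \<and>
      (\<forall>c :: nat \<Rightarrow> real. (\<forall>j x. (\<Sum>i<1. c i * g i j x) = 0) \<longrightarrow> (\<forall>i<1. c i = 0))"
    using f0 by (intro exI[of _ "\<lambda>_. f0"]) auto
next
  fix k and g :: "nat \<Rightarrow> nat \<Rightarrow> real \<Rightarrow> real"
  assume eig: "\<forall>i<k. eigen_fun m eps lam (g i)"
    and indep: "\<forall>c :: nat \<Rightarrow> real. (\<forall>j x. (\<Sum>i<k. c i * g i j x) = 0) \<longrightarrow> (\<forall>i<k. c i = 0)"
  show "k \<le> 1"
  proof (rule ccontr)
    assume "\<not> k \<le> 1"
    then have "1 < k" by simp
    then have "eigen_fun m eps lam (g 0)" "eigen_fun m eps lam (g 1)" using eig by auto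
    then obtain c0 c1 where c0: "g 0 = (\<lambda>j x. c0 * w j x)" and c1: "g 1 = (\<lambda>j x. c1 * w j x)"
      using span by blast
    have "\<exists>d0 d1 :: real. (d0 \<noteq> 0 \<or> d1 \<noteq> 0) \<and> d0 * c0 + d1 * c1 = 0"
    proof (cases "c0 = 0")
      case True
      then show ?thesis by (intro exI[of _ 1] exI[of _ 0]) simp
    next
      case False
      then show ?thesis by (intro exI[of _ c1] exI[of _ "- c0"]) simp
    qed
    then obtain d0 d1 :: real where d: "d0 \<noteq> 0 \<or> d1 \<noteq> 0" "d0 * c0 + d1 * c1 = 0" by blast
    define c :: "nat \<Rightarrow> real" where "c i = (if i = 0 then d0 else if i = 1 then d1 else 0)" for i
    have "(\<Sum>i<k. c i * g i j x) = 0" for j x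
    proof -
      have "(\<Sum>i<k. c i * g i j x) = d0 * g 0 j x + d1 * g 1 j x"
        using sum_lessThan_supported_01[OF \<open>1 < k\<close>, of c "\<lambda>i. g i j x"] by (simp add: c_def)
      also have "\<dots> = (d0 * c0 + d1 * c1) * w j x" unfolding c0 c1 by (simp add: algebra_simps)
      finally show ?thesis using d(2) by simp
    qed
    then have "c 0 = 0" "c 1 = 0" using indep \<open>1 < k\<close> by auto
    then show False using d(1) by (simp add: c_def)
  qed
qed

lemma eigenvalue_eqI:
  assumes "n \<le> eig_count m eps l" and "\<And>lam. lam < l \<Longrightarrow> eig_count m eps lam < n"
  shows "eigenvalue m eps n = l"
  unfolding eigenvalue_def
proof (rule cInf_eq_minimum)
  show "l \<in> {lam. n \<le> eig_count m eps lam}" using assms(1) by simp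
  fix lam assume "lam \<in> {lam. n \<le> eig_count m eps lam}"
  then show "l \<le> lam" using assms(2)[of lam] by force
qed

lemma first_three_eigenvalues_eqI:
  fixes l1 l2 l3 :: real
  assumes order: "l1 < l2" "l2 < l3"
    and mult: "multiplicity m eps l1 = 1" "multiplicity m eps l2 = 1" "multiplicity m eps l3 = 1"
    and others: "\<And>mu. mu \<le> l3 \<Longrightarrow> mu \<notin> {l1, l2, l3} \<Longrightarrow> multiplicity m eps mu = 0"
  shows "eigenvalue m eps 1 = l1" "eigenvalue m eps 2 = l2" "eigenvalue m eps 3 = l3"
proof -
  have count: "eig_count m eps lam = card {l \<in> {l1, l2, l3}. l \<le> lam}" if "lam \<le> l3" for lam
  proof -
    have "{mu. mu \<le> lam \<and> 0 < multiplicity m eps mu} = {l \<in> {l1, l2, l3}. l \<le> lam}"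
    proof (intro set_eqI iffI)
      fix mu assume "mu \<in> {mu. mu \<le> lam \<and> 0 < multiplicity m eps mu}"
      then show "mu \<in> {l \<in> {l1, l2, l3}. l \<le> lam}" using others[of mu] that by fastforce
    qed (use mult in auto)
    then have "eig_count m eps lam = (\<Sum>mu\<in>{l \<in> {l1, l2, l3}. l \<le> lam}. multiplicity m eps mu)"
      unfolding eig_count_def by simp
    also have "\<dots> = (\<Sum>mu\<in>{l \<in> {l1, l2, l3}. l \<le> lam}. 1)"
      by (rule sum.cong) (use mult in auto)
    finally show ?thesis by simp
  qed
  have below_l1: "eig_count m eps lam = 0" if "lam < l1" for lam
  proof -
    have "{l \<in> {l1, l2, l3}. l \<le> lam} = {}" using that order by auto
    then show ?thesis using count[of lam] that order by simp
  qed
  have below_l2: "eig_count m eps lam = 1" if "l1 \<le> lam" "lam < l2" for lam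
  proof -
    have "{l \<in> {l1, l2, l3}. l \<le> lam} = {l1}" using that order by auto
    then show ?thesis using count[of lam] that order by simp
  qed
  have below_l3: "eig_count m eps lam = 2" if "l2 \<le> lam" "lam < l3" for lam
  proof -
    have "{l \<in> {l1, l2, l3}. l \<le> lam} = {l1, l2}" using that order by auto
    then show ?thesis using count[of lam] that order by simp
  qed
  have at_l3: "eig_count m eps l3 = 3"
  proof -
    have "{l \<in> {l1, l2, l3}. l \<le> l3} = {l1, l2, l3}" using order by auto
    then show ?thesis using count[of l3] order by simp
  qed
  show "eigenvalue m eps 1 = l1"
    by (rule eigenvalue_eqI) (use below_l1 below_l2[of l1] order in auto)
  show "eigenvalue m eps 2 = l2"
  proof (rule eigenvalue_eqI)
    show "2 \<le> eig_count m eps l2" using below_l3[of l2] order by simp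
    show "eig_count m eps lam < 2" if "lam < l2" for lam
      using below_l1[of lam] below_l2[of lam] that by (cases "lam < l1") auto
  qed
  show "eigenvalue m eps 3 = l3"
  proof (rule eigenvalue_eqI)
    show "3 \<le> eig_count m eps l3" using at_l3 by simp
    show "eig_count m eps lam < 3" if "lam < l3" for lam
      using below_l1[of lam] below_l2[of lam] below_l3[of lam] that
      by (cases "lam < l1"; cases "lam < l2") auto
  qed
qed

text \<open>The zeros \<open>t = k/2\<close> of \<open>sym_factor\<close> (of \<open>anti_factor\<close>) give the eigenfunctions that are
  symmetric (antisymmetric) under the reflection of \<open>I(m,eps)\<close> exchanging \<open>v\<^sub>1\<close> and \<open>v\<^sub>4\<close>.\<close>

definition sym_factor :: "nat \<Rightarrow> real \<Rightarrow> real \<Rightarrow> real" where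
  "sym_factor m eps t = cos t * cos (eps*t) - real m * sin t * sin (eps*t)"

definition anti_factor :: "nat \<Rightarrow> real \<Rightarrow> real \<Rightarrow> real" where
  "anti_factor m eps t = sin t * cos (eps*t) + cos t * sin (eps*t) / real m"

lemma secular_factor:
  assumes "m \<ge> 1"
  shows "secular m eps k = 2 * sym_factor m eps (k/2) * anti_factor m eps (k/2)"
proof -
  have k: "k * eps = 2 * (eps * (k/2))" by simp
  show ?thesis
    unfolding secular_def wave_cos_coeff_def wave_sin_coeff_def sym_factor_def anti_factor_def
      k sin_double cos_double
    using assms by (simp add: field_simps power2_eq_square)
qed

lemma sin_cos_comb_pos:
  fixes a b y :: real
  assumes "a > 0" "b > 0" "0 \<le> y" "y \<le> pi/2"
  shows "a * sin y + b * cos y > 0"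
proof (cases "y < pi/2")
  case True
  then have "cos y > 0" using assms by (intro cos_gt_zero_pi) auto
  moreover have "sin y \<ge> 0" using assms by (intro sin_ge_zero) auto
  ultimately show ?thesis using assms by (simp add: add_nonneg_pos)
next
  case False
  then have "y = pi/2" using assms by simp
  then have "sin y = 1" "cos y = 0" using sin_pi_half cos_pi_half by metis+
  then show ?thesis using assms by simp
qed

lemma cos_ge_half: "0 \<le> d \<Longrightarrow> d \<le> pi/3 \<Longrightarrow> cos d \<ge> 1/2"
  using cos_monotone_0_pi_le[of d "pi/3"] cos_60 by simp

lemma wave_coeffs_at_anti_root:
  assumes m: "m \<ge> 1" and A: "anti_factor m eps t = 0"
  shows "wave_cos_coeff m eps (2*t) = - sin t" "wave_sin_coeff m eps (2*t) = cos t"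
proof -
  have d: "2 * t * eps = 2 * (eps * t)" by simp
  have "wave_cos_coeff m eps (2*t) + sin t = 2 * cos (eps*t) * anti_factor m eps t"
    unfolding wave_cos_coeff_def anti_factor_def d sin_double cos_double_cos using m
    by (simp add: field_simps power2_eq_square)
  then show "wave_cos_coeff m eps (2*t) = - sin t" using A by simp
  have "wave_sin_coeff m eps (2*t) - cos t = - 2 * real m * sin (eps*t) * anti_factor m eps t"
    unfolding wave_sin_coeff_def anti_factor_def d sin_double cos_double_sin using m
    by (simp add: field_simps power2_eq_square)
  then show "wave_sin_coeff m eps (2*t) = cos t" using A by simp
qed

lemma wave_coeffs_at_sym_root:
  assumes m: "m \<ge> 1" and S: "sym_factor m eps t = 0"
  shows "wave_cos_coeff m eps (2*t) = sin t" "wave_sin_coeff m eps (2*t) = - cos t"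
proof -
  have d: "2 * t * eps = 2 * (eps * t)" by simp
  have "wave_cos_coeff m eps (2*t) - sin t = 2 * sin (eps*t) / real m * sym_factor m eps t"
    unfolding wave_cos_coeff_def sym_factor_def d sin_double cos_double_sin using m
    by (simp add: field_simps power2_eq_square)
  then show "wave_cos_coeff m eps (2*t) = sin t" using S by simp
  have "wave_sin_coeff m eps (2*t) + cos t = 2 * cos (eps*t) * sym_factor m eps t"
    unfolding wave_sin_coeff_def sym_factor_def d sin_double cos_double_cos using m
    by (simp add: field_simps power2_eq_square)
  then show "wave_sin_coeff m eps (2*t) = - cos t" using S by simp
qed

lemma x_cos_le_sin: "0 \<le> x \<Longrightarrow> x \<le> pi \<Longrightarrow> x * cos x \<le> sin x"
proof -
  assume x: "0 \<le> x" "x \<le> pi"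
  have "(\<lambda>x. sin x - x * cos x) 0 \<le> (\<lambda>x. sin x - x * cos x) x"
  proof (rule DERIV_nonneg_imp_nondecreasing[OF x(1)])
    fix y assume y: "0 \<le> y" "y \<le> x"
    have "((\<lambda>x. sin x - x * cos x) has_real_derivative y * sin y) (at y)"
      by (auto intro!: derivative_eq_intros simp: algebra_simps)
    moreover have "y * sin y \<ge> 0" using y x by (intro mult_nonneg_nonneg sin_ge_zero) auto
    ultimately show "\<exists>d. ((\<lambda>x. sin x - x * cos x) has_real_derivative d) (at y) \<and> d \<ge> 0" by blast
  qed
  then show ?thesis by simp
qed

lemma sinc_antimono:
  assumes "0 < a" "a \<le> b" "b \<le> pi"
  shows "a * sin b \<le> b * sin a"
proof -
  have "(\<lambda>x. sin x / x) b \<le> (\<lambda>x. sin x / x) a"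
  proof (rule DERIV_nonpos_imp_nonincreasing[OF assms(2)])
    fix y assume y: "a \<le> y" "y \<le> b"
    then have y0: "y > 0" using assms by simp
    have "((\<lambda>x. sin x / x) has_real_derivative (cos y * y - sin y) / y^2) (at y)"
      using y0 by (auto intro!: derivative_eq_intros simp: power2_eq_square)
    moreover have "(cos y * y - sin y) / y^2 \<le> 0"
      using x_cos_le_sin[of y] y assms by (intro divide_nonpos_nonneg) (auto simp: mult.commute)
    ultimately show "\<exists>d. ((\<lambda>x. sin x / x) has_real_derivative d) (at y) \<and> d \<le> 0" by blast
  qed
  then show ?thesis using assms by (simp add: field_simps)
qed

lemma sin_concave:
  assumes "0 \<le> r" "r \<le> 1" "0 \<le> z" "z \<le> pi"
  shows "r * sin z \<le> sin (r * z)"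
proof (cases "r = 0 \<or> z = 0")
  case True
  then show ?thesis by auto
next
  case False
  then have rz: "0 < r * z" using assms by simp
  have "r * z \<le> z" using assms by (simp add: mult_left_le_one_le)
  from sinc_antimono[OF rz this assms(4)] have "r * z * sin z \<le> z * sin (r * z)" .
  then show ?thesis using False assms by (simp add: mult.assoc mult.left_commute[of r z])
qed

lemma jordan_ineq:
  assumes "0 \<le> y" "y \<le> pi/2"
  shows "2 / pi * y \<le> sin y"
proof -
  have "(2 * y / pi) * sin (pi/2) \<le> sin ((2 * y / pi) * (pi/2))"
    using assms by (intro sin_concave) (auto simp: field_simps)
  then show ?thesis by simp
qed

lemma one_minus_cos_le: "1 - cos (z::real) \<le> z^2 / 2"
proof -
  have "cos z = cos (2 * (z/2))" by simp
  also have "\<dots> = 1 - 2 * sin (z/2) ^ 2" by (rule cos_double_sin)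
  finally have "1 - cos z = 2 * sin (z/2) ^ 2" by simp
  also have "\<dots> \<le> 2 * (z/2)^2"
    using abs_sin_x_le_abs_x[of "z/2"] by (simp only: abs_le_square_iff)
  finally show ?thesis by (simp add: power2_eq_square)
qed

lemma zero_points_scale: "c \<noteq> 0 \<Longrightarrow> zero_points m eps (\<lambda>j x. c * u j x) = zero_points m eps u"
  by (simp add: zero_points_def)

locale thin_bridge =
  fixes m :: nat and eps :: real
  assumes m_ge_1: "1 \<le> m" and eps_pos: "0 < eps" and eps_m_le: "eps * real m \<le> 1/40"
begin

lemma eps_le: "eps \<le> 1/40"
proof -
  have "eps * 1 \<le> eps * real m" using m_ge_1 eps_pos by (intro mult_left_mono) auto
  then show ?thesis using eps_m_le by simp
qed

lemma bridge_angle: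
  assumes "0 < t" "t \<le> 3*pi/2"
  shows "0 < eps*t" "eps*t \<le> pi/3" "0 < sin (eps*t)" "cos (eps*t) \<ge> 1/2" "0 < cos (eps*t)"
proof -
  show "0 < eps*t" using eps_pos assms by simp
  have "eps * t \<le> (1/40) * (3*pi/2)" using eps_le assms eps_pos by (intro mult_mono) auto
  also have "\<dots> \<le> pi/3" using pi_gt3 by simp
  finally show "eps*t \<le> pi/3" .
  then show "0 < sin (eps*t)" using \<open>0 < eps*t\<close> pi_gt3 by (intro sin_gt_zero) auto
  show "cos (eps*t) \<ge> 1/2" using cos_ge_half \<open>0 < eps*t\<close> \<open>eps*t \<le> pi/3\<close> by simp
  then show "0 < cos (eps*t)" by simp
qed

lemma m_pos: "real m > 0" using m_ge_1 by simp

lemma sym_factor_deriv: "(sym_factor m eps has_real_derivative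
   (- (1 + real m * eps) * sin t * cos (eps*t) - (eps + real m) * cos t * sin (eps*t))) (at t)"
  unfolding sym_factor_def[abs_def] by (auto intro!: derivative_eq_intros simp: algebra_simps)

lemma anti_factor_deriv: "(anti_factor m eps has_real_derivative
   ((1 + eps / real m) * cos t * cos (eps*t) - (eps + 1 / real m) * sin t * sin (eps*t))) (at t)"
  unfolding anti_factor_def[abs_def] using m_pos
  by (auto intro!: derivative_eq_intros simp: field_simps power2_eq_square)

lemma sym_factor_cont: "continuous_on S (sym_factor m eps)"
  unfolding sym_factor_def[abs_def] by (intro continuous_intros)
lemma anti_factor_cont: "continuous_on S (anti_factor m eps)"
  unfolding anti_factor_def[abs_def] using m_pos by (intro continuous_intros) auto

lemma sym_factor_decreasing:
  assumes "0 < a" "a < b" "b \<le> pi/2"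
  shows "sym_factor m eps b < sym_factor m eps a"
proof (rule DERIV_neg_imp_decreasing[OF \<open>a < b\<close>])
  fix x assume x: "a \<le> x" "x \<le> b"
  have x0: "0 < x" "x \<le> 3*pi/2" using x assms by auto
  have "sin x > 0" using x assms pi_gt3 by (intro sin_gt_zero) auto
  moreover have "cos x \<ge> 0" using x assms by (intro cos_ge_zero) auto
  moreover have "0 < 1 + real m * eps" "0 < eps + real m" using m_pos eps_pos by (smt (verit) mult_pos_pos)+
  ultimately have P: "(1 + real m * eps) * sin x * cos (eps*x) + (eps + real m) * cos x * sin (eps*x) > 0"
    using bridge_angle[OF x0] eps_pos by (intro add_pos_nonneg mult_pos_pos mult_nonneg_nonneg) auto
  have "(sym_factor m eps has_real_derivative - ((1 + real m * eps) * sin x * cos (eps*x) + (eps + real m) * cos x * sin (eps*x))) (at x)"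
    using sym_factor_deriv[of x] by (rule DERIV_cong) (simp add: algebra_simps)
  then show "\<exists>y. (sym_factor m eps has_real_derivative y) (at x) \<and> y < 0" using P by (intro exI conjI) auto
qed

lemma sym_factor_neg:
  assumes "pi/2 \<le> t" "t \<le> pi"
  shows "sym_factor m eps t < 0"
proof -
  have t0: "0 < t" "t \<le> 3*pi/2" using assms pi_gt_zero by linarith+
  have "cos t \<le> 0" using cos_ge_zero[of "t - pi"] assms by simp
  then have c: "cos t * cos (eps*t) \<le> 0" using bridge_angle[OF t0] by (simp add: mult_nonpos_nonneg)
  show ?thesis
  proof (cases "t < pi")
    case True
    then have "sin t > 0" using t0 by (intro sin_gt_zero) auto
    then have "real m * sin t * sin (eps*t) > 0" using bridge_angle[OF t0] m_pos by simp
    then show ?thesis using c unfolding sym_factor_def by linarith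
  next
    case False
    then have "t = pi" using assms by simp
    then show ?thesis using bridge_angle[OF t0] unfolding sym_factor_def by simp
  qed
qed

lemma sym_factor_increasing:
  assumes "pi \<le> a" "a < b" "b \<le> 3*pi/2"
  shows "sym_factor m eps a < sym_factor m eps b"
proof (rule DERIV_pos_imp_increasing[OF \<open>a < b\<close>])
  fix x assume x: "a \<le> x" "x \<le> b"
  have x0: "0 < x" "x \<le> 3*pi/2" using x assms pi_gt_zero by linarith+
  define y where "y = x - pi"
  have y: "0 \<le> y" "y \<le> pi/2" using x assms by (auto simp: y_def)
  have sx: "sin x = - sin y" and cx: "cos x = - cos y" by (simp_all add: y_def)
  have "0 < 1 + real m * eps" "0 < eps + real m" using m_pos eps_pos by (smt (verit) mult_pos_pos)+
  then have P: "(1 + real m * eps) * cos (eps*x) * sin y + (eps + real m) * sin (eps*x) * cos y > 0"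
    using bridge_angle[OF x0] by (intro sin_cos_comb_pos y mult_pos_pos) auto
  have "(sym_factor m eps has_real_derivative ((1 + real m * eps) * cos (eps*x) * sin y + (eps + real m) * sin (eps*x) * cos y)) (at x)"
    using sym_factor_deriv[of x] by (rule DERIV_cong) (simp add: sx cx algebra_simps)
  then show "\<exists>y. (sym_factor m eps has_real_derivative y) (at x) \<and> y > 0" using P by (intro exI conjI) auto
qed

lemma anti_factor_pos:
  assumes "0 < t" "t \<le> pi/2"
  shows "anti_factor m eps t > 0"
proof -
  have t0: "0 < t" "t \<le> 3*pi/2" using assms by auto
  have "sin t > 0" using assms pi_gt3 by (intro sin_gt_zero) auto
  moreover have "cos t \<ge> 0" using assms by (intro cos_ge_zero) auto
  ultimately show ?thesis unfolding anti_factor_def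
    using bridge_angle[OF t0] m_pos by (intro add_pos_nonneg mult_pos_pos divide_nonneg_pos mult_nonneg_nonneg) auto
qed

lemma anti_factor_decreasing:
  assumes "pi/2 \<le> a" "a < b" "b \<le> pi"
  shows "anti_factor m eps b < anti_factor m eps a"
proof (rule DERIV_neg_imp_decreasing[OF \<open>a < b\<close>])
  fix x assume x: "a \<le> x" "x \<le> b"
  have x0: "0 < x" "x \<le> 3*pi/2" using x assms pi_gt_zero by linarith+
  define y where "y = x - pi/2"
  have y: "0 \<le> y" "y \<le> pi/2" using x assms by (auto simp: y_def)
  have sx: "sin x = cos y" and cx: "cos x = - sin y"
    by (simp_all add: y_def sin_diff cos_diff)
  have "0 < 1 + eps / real m" "0 < eps + 1 / real m" using m_pos eps_pos by (smt (verit) divide_pos_pos)+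
  then have P: "(1 + eps / real m) * cos (eps*x) * sin y + (eps + 1 / real m) * sin (eps*x) * cos y > 0"
    using bridge_angle[OF x0] by (intro sin_cos_comb_pos y mult_pos_pos) auto
  have "(anti_factor m eps has_real_derivative - ((1 + eps / real m) * cos (eps*x) * sin y + (eps + 1 / real m) * sin (eps*x) * cos y)) (at x)"
    using anti_factor_deriv[of x] by (rule DERIV_cong) (simp add: sx cx algebra_simps)
  then show "\<exists>y. (anti_factor m eps has_real_derivative y) (at x) \<and> y < 0" using P by (intro exI conjI) auto
qed

lemma anti_factor_neg:
  assumes "pi \<le> t" "t \<le> 3*pi/2"
  shows "anti_factor m eps t < 0"
proof -
  have t0: "0 < t" "t \<le> 3*pi/2" using assms pi_gt_zero by linarith+
  define y where "y = t - pi"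
  have y: "0 \<le> y" "y \<le> pi/2" using assms by (auto simp: y_def)
  have sx: "sin t = - sin y" and cx: "cos t = - cos y" by (simp_all add: y_def)
  have "cos (eps*t) * sin y + (sin (eps*t) / real m) * cos y > 0"
    using bridge_angle[OF t0] m_pos by (intro sin_cos_comb_pos y) auto
  then show ?thesis unfolding anti_factor_def sx cx by (simp add: algebra_simps)
qed

lemma m_sin_lt_cos:
  assumes "0 < t" "t \<le> 3*pi/2"
  shows "real m * sin (eps*t) < cos (eps*t)"
proof -
  have "real m * sin (eps*t) \<le> real m * (eps*t)"
    using sin_x_le_x[of "eps*t"] bridge_angle[OF assms] by (intro mult_left_mono) auto
  also have "\<dots> = (eps * real m) * t" by simp
  also have "\<dots> \<le> (1/40) * (3*pi/2)" using eps_m_le assms eps_pos m_pos by (intro mult_mono) auto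
  also have "\<dots> < 1/2" using pi_less_4 by simp
  finally show ?thesis using bridge_angle[OF assms] by simp
qed

lemma sym_factor_0: "sym_factor m eps 0 = 1" by (simp add: sym_factor_def)

lemma sym_factor_pi2: "sym_factor m eps (pi/2) < 0"
  using sym_factor_neg[of "pi/2"] by simp

lemma sym_factor_5pi4: "sym_factor m eps (5*pi/4) < 0"
proof -
  have t: "0 < 5*pi/4" "5*pi/4 \<le> 3*pi/2" by auto
  have a: "5*pi/4 = pi/4 + pi" by simp
  have "sin (5*pi/4) = - sin (pi/4)" using sin_periodic_pi[of "pi/4"] a by metis
  then have s5: "sin (5*pi/4) = - (sqrt 2 / 2)" by (simp add: sin_45)
  have "cos (5*pi/4) = - cos (pi/4)" using cos_periodic_pi[of "pi/4"] a by metis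
  then have c5: "cos (5*pi/4) = - (sqrt 2 / 2)" by (simp add: cos_45)
  have "sym_factor m eps (5*pi/4) = (sqrt 2 / 2) * (real m * sin (eps*(5*pi/4)) - cos (eps*(5*pi/4)))"
    unfolding sym_factor_def s5 c5 by (simp add: algebra_simps)
  also have "\<dots> < 0" using m_sin_lt_cos[OF t] by (intro mult_pos_neg) auto
  finally show ?thesis .
qed

lemma sym_factor_3pi2: "sym_factor m eps (3*pi/2) > 0"
proof -
  have t: "0 < 3*pi/2" "3*pi/2 \<le> 3*pi/2" by auto
  have a: "3*pi/2 = pi/2 + pi" by simp
  have "sin (3*pi/2) = - sin (pi/2)" using sin_periodic_pi[of "pi/2"] a by metis
  then have s5: "sin (3*pi/2) = - 1" by simp
  have "cos (3*pi/2) = - cos (pi/2)" using cos_periodic_pi[of "pi/2"] a by metis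
  then have c5: "cos (3*pi/2) = 0" by simp
  have "sym_factor m eps (3*pi/2) = real m * sin (eps*(3*pi/2))"
    unfolding sym_factor_def s5 c5 by simp
  also have "\<dots> > 0" using bridge_angle[OF t] m_pos by simp
  finally show ?thesis .
qed

lemma anti_factor_3pi4: "anti_factor m eps (3*pi/4) > 0"
proof -
  have t: "0 < 3*pi/4" "3*pi/4 \<le> 3*pi/2" by auto
  have a: "3*pi/4 = pi - pi/4" by simp
  have "sin (3*pi/4) = sin (pi/4)" using sin_pi_minus[of "pi/4"] a by metis
  then have s5: "sin (3*pi/4) = sqrt 2 / 2" by (simp add: sin_45)
  have "cos (3*pi/4) = - cos (pi/4)" using cos_pi_minus[of "pi/4"] a by metis
  then have c5: "cos (3*pi/4) = - (sqrt 2 / 2)" by (simp add: cos_45)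
  have "anti_factor m eps (3*pi/4) = (sqrt 2 / 2) * (cos (eps*(3*pi/4)) - sin (eps*(3*pi/4)) / real m)"
    unfolding anti_factor_def s5 c5 by (simp add: algebra_simps)
  also have "\<dots> > 0"
  proof -
    have s: "0 < sin (eps*(3*pi/4))" using bridge_angle[OF t] by simp
    have "sin (eps*(3*pi/4)) / real m \<le> sin (eps*(3*pi/4))"
      using s m_ge_1 by (simp add: divide_le_eq)
    also have "\<dots> \<le> real m * sin (eps*(3*pi/4))" using s m_ge_1 by simp
    also have "\<dots> < cos (eps*(3*pi/4))" using m_sin_lt_cos[OF t] .
    finally show ?thesis by simp
  qed
  finally show ?thesis .
qed

lemma anti_factor_pi: "anti_factor m eps pi < 0"
  using anti_factor_neg[of pi] by simp

lemma sin_bridge_pos: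
  assumes "0 < k" "k \<le> 3*pi"
  shows "0 < sin (k*eps)"
proof (rule sin_gt_zero)
  have "0 < eps*(k/2)" "eps*(k/2) \<le> pi/3" using bridge_angle[of "k/2"] assms by auto
  moreover have "k*eps = 2 * (eps*(k/2))" by simp
  ultimately show "0 < k*eps" "k*eps < pi" using pi_gt_zero by linarith+
qed

end

locale low_modes = thin_bridge +
  fixes t1 t2 t3 :: real
  assumes t1: "0 < t1" "t1 < pi/2" and t2: "3*pi/4 < t2" "t2 < pi" and t3: "5*pi/4 < t3" "t3 < 3*pi/2"
    and sym_t1: "sym_factor m eps t1 = 0" and anti_t2: "anti_factor m eps t2 = 0"
    and sym_t3: "sym_factor m eps t3 = 0"
    and no_other_roots: "\<And>t. 0 < t \<Longrightarrow> t \<le> t3 \<Longrightarrow>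
      sym_factor m eps t = 0 \<or> anti_factor m eps t = 0 \<Longrightarrow> t = t1 \<or> t = t2 \<or> t = t3"

lemma (in thin_bridge) secular_roots:
  obtains t1 t2 t3 where "low_modes m eps t1 t2 t3"
proof -
  obtain t1 where t1: "0 \<le> t1" "t1 \<le> pi/2" "sym_factor m eps t1 = 0"
    using IVT2'[of "sym_factor m eps" "pi/2" 0 0] sym_factor_pi2 sym_factor_0 sym_factor_cont by auto
  have "t1 \<noteq> pi/2" "t1 \<noteq> 0" using t1(3) sym_factor_pi2 sym_factor_0 by (metis less_irrefl zero_neq_one)+
  then have t1': "0 < t1" "t1 < pi/2" using t1 by linarith+
  obtain t3 where t3: "5*pi/4 \<le> t3" "t3 \<le> 3*pi/2" "sym_factor m eps t3 = 0"
    using IVT'[of "sym_factor m eps" "5*pi/4" 0 "3*pi/2"] sym_factor_5pi4 sym_factor_3pi2 sym_factor_cont by auto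
  have "t3 \<noteq> 5*pi/4" "t3 \<noteq> 3*pi/2" using t3(3) sym_factor_5pi4 sym_factor_3pi2 by (metis less_irrefl zero_neq_one)+
  then have t3': "5*pi/4 < t3" "t3 < 3*pi/2" using t3 by linarith+
  obtain t2 where t2: "3*pi/4 \<le> t2" "t2 \<le> pi" "anti_factor m eps t2 = 0"
    using IVT2'[of "anti_factor m eps" pi 0 "3*pi/4"] anti_factor_3pi4 anti_factor_pi anti_factor_cont by auto
  have "t2 \<noteq> 3*pi/4" "t2 \<noteq> pi" using t2(3) anti_factor_3pi4 anti_factor_pi by (metis less_irrefl zero_neq_one)+
  then have t2': "3*pi/4 < t2" "t2 < pi" using t2 by linarith+
  have uniq: "t = t1 \<or> t = t2 \<or> t = t3"
    if t: "0 < t" "t \<le> t3" and z: "sym_factor m eps t = 0 \<or> anti_factor m eps t = 0" for t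
  proof (cases "t < pi/2")
    case True
    then have "anti_factor m eps t > 0" using t by (intro anti_factor_pos) auto
    then have "sym_factor m eps t = 0" using z by auto
    then have "t = t1" using sym_factor_decreasing[of t t1] sym_factor_decreasing[of t1 t] t1 t1' t True
      by (cases t t1 rule: linorder_cases) auto
    then show ?thesis by simp
  next
    case False
    show ?thesis
    proof (cases "t \<le> pi")
      case True
      then have "sym_factor m eps t < 0" using False by (intro sym_factor_neg) auto
      then have "anti_factor m eps t = 0" using z by auto
      then have "t = t2" using anti_factor_decreasing[of t t2] anti_factor_decreasing[of t2 t] t2 t2' t True False
        by (cases t t2 rule: linorder_cases) auto
      then show ?thesis by simp
    next
      case False
      then have "anti_factor m eps t < 0" using t t3' by (intro anti_factor_neg) auto
      then have "sym_factor m eps t = 0" using z by auto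
      then have "t = t3" using sym_factor_increasing[of t t3] t3 t3' t False
        by (cases t t3 rule: linorder_cases) auto
      then show ?thesis by simp
    qed
  qed
  have "low_modes m eps t1 t2 t3"
    by unfold_locales (use uniq t1' t2' t3' t1(3) t2(3) t3(3) m_ge_1 eps_pos eps_m_le in auto)
  then show ?thesis by (rule that)
qed

context low_modes
begin

definition "mix = - sin t2 / sin t3"

lemma sin_t2_pos: "sin t2 > 0" using t2 by (intro sin_gt_zero) auto
lemma cos_t2_neg: "cos t2 < 0"
proof -
  have "cos t2 < cos (pi/2)" using t2 by (intro cos_monotone_0_pi) auto
  then show ?thesis by simp
qed
lemma sin_t3_neg: "sin t3 < 0" using t3 by (intro sin_lt_zero) auto
lemma cos_t3_neg: "cos t3 < 0"
proof -
  have "cos (t3 - pi) > 0" using t3 by (intro cos_gt_zero_pi) auto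
  then show ?thesis by simp
qed

lemma mix_pos: "mix > 0" using sin_t2_pos sin_t3_neg unfolding mix_def by (simp add: divide_pos_neg)
lemma mix_cancels_at_v2: "sin t2 + mix * sin t3 = 0" using sin_t3_neg unfolding mix_def by simp

lemma t2_bounds: "0 < t2" "t2 \<le> 3*pi/2" using t2 pi_gt_zero by linarith+
lemma t3_bounds: "0 < t3" "t3 \<le> 3*pi/2" using t3 pi_gt_zero by linarith+

lemma sin_t2_lt: "sin t2 < 1/5"
proof -
  have A: "sin t2 * cos (eps*t2) = (- cos t2) * sin (eps*t2) / real m"
    using anti_t2 unfolding anti_factor_def by (simp add: field_simps)
  have "(- cos t2) * sin (eps*t2) / real m \<le> sin (eps*t2)"
  proof -
    have "(- cos t2) * sin (eps*t2) \<le> 1 * sin (eps*t2)"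
      using bridge_angle[OF t2_bounds] by (intro mult_right_mono) auto
    also have "\<dots> \<le> real m * sin (eps*t2)" using bridge_angle[OF t2_bounds] m_ge_1 by simp
    finally have "(- cos t2) * sin (eps*t2) \<le> sin (eps*t2) * real m" by (simp add: mult.commute)
    then show ?thesis using m_pos by (simp only: divide_le_eq) simp
  qed
  also have "\<dots> \<le> eps * t2" using sin_x_le_x bridge_angle[OF t2_bounds] by simp
  also have "\<dots> \<le> (1/40) * t2" using eps_le t2_bounds by (intro mult_right_mono) auto
  also have "\<dots> < (1/40) * 4" using t2 pi_less_4 by simp
  finally have "sin t2 * cos (eps*t2) < 1/10" using A by simp
  moreover have "cos (eps*t2) \<ge> 1/2" using bridge_angle[OF t2_bounds] by simp
  ultimately have "sin t2 * (1/2) < 1/10"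
    using sin_t2_pos by (smt (verit) mult_left_mono)
  then show ?thesis by simp
qed

lemma sin_t3_sq_gt: "(sin t3)^2 > 1/2"
proof -
  define a where "a = - sin t3"
  define c where "c = - cos t3"
  have a: "a > 0" and c: "c > 0" using sin_t3_neg cos_t3_neg by (auto simp: a_def c_def)
  have "c * cos (eps*t3) = real m * a * sin (eps*t3)"
    using sym_t3 unfolding sym_factor_def a_def c_def by (simp add: algebra_simps)
  also have "\<dots> < a * cos (eps*t3)"
    using m_sin_lt_cos[OF t3_bounds] a by (simp add: mult.assoc)
  finally have "c < a" using bridge_angle[OF t3_bounds] by simp
  then have "c^2 < a^2" using c by (simp add: power_strict_mono)
  moreover have "a^2 + c^2 = 1" unfolding a_def c_def by simp
  ultimately show ?thesis unfolding a_def by simp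
qed

lemma mix_lt_half: "mix < 1/2"
proof -
  have "(2 * sin t2)^2 < (- sin t3)^2"
  proof -
    have "(2 * sin t2)^2 < (2 * (1/5))^2" using sin_t2_pos sin_t2_lt by (intro power_strict_mono) auto
    also have "\<dots> < 1/2" by (simp add: power2_eq_square)
    also have "\<dots> < (- sin t3)^2" using sin_t3_sq_gt by simp
    finally show ?thesis .
  qed
  then have "2 * sin t2 < - sin t3"
    using sin_t3_neg by (smt (verit) power_mono sin_t2_pos)
  then show ?thesis unfolding mix_def using sin_t3_neg by (simp add: field_simps)
qed

lemma t3_lt_2t2: "t3 < 2 * t2" using t2 t3 by linarith

lemma mix_pos_on_e1:
  assumes x: "0 < x" "x < 1/2"
  shows "sin (2*t2*x) + mix * sin (2*t3*x) > 0"
proof -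
  have s2x: "sin (2*t2*x) > 0"
  proof (rule sin_gt_zero)
    show "0 < 2*t2*x" using x t2_bounds by simp
    have "2*t2*x < 2*t2*(1/2)" using x t2_bounds by (intro mult_strict_left_mono) auto
    also have "2*t2*(1/2) = t2" by simp
    finally show "2*t2*x < pi" using t2(2) by (rule less_trans)
  qed
  show ?thesis
  proof (cases "2*t3*x \<le> pi")
    case True
    then have "sin (2*t3*x) \<ge> 0" using x t3_bounds by (intro sin_ge_zero) auto
    then show ?thesis using s2x mix_pos by (simp add: add_pos_nonneg)
  next
    case False
    have "2*t3*x < 2*t3*(1/2)" using x t3_bounds by (intro mult_strict_left_mono) auto
    then have up3: "2*t3*x < t3" by simp
    have "2*t2*x < 2*t2*(1/2)" using x t2_bounds by (intro mult_strict_left_mono) auto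
    then have up2: "2*t2*x < t2" by simp
    have "sin (2*t3*x - pi) < sin (t3 - pi)"
      using False up3 t3 by (intro sin_monotone_2pi) auto
    then have A: "sin (2*t3*x) > sin t3" by simp
    have "2*t3*x < 2*(2*t2*x)" using t3_lt_2t2 x by (simp add: mult.assoc)
    then have low2: "pi/2 < 2*t2*x" using False by linarith
    have "sin (pi - t2) < sin (pi - 2*t2*x)"
      using low2 up2 t2 by (intro sin_monotone_2pi) auto
    then have B: "sin (2*t2*x) > sin t2" by simp
    have "mix * sin (2*t3*x) > mix * sin t3" using A mix_pos by simp
    then show ?thesis using B mix_cancels_at_v2 by linarith
  qed
qed

lemma mix_neg_on_e2:
  assumes x: "0 \<le> x" "x < 1/2"
  shows "(- sin t2 * cos (2*t2*x) + cos t2 * sin (2*t2*x))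
    + mix * (sin t3 * cos (2*t3*x) - cos t3 * sin (2*t3*x)) < 0"
proof -
  define y where "y = 1/2 - x"
  have y: "0 < y" "y \<le> 1/2" using x by (auto simp: y_def)
  have r2: "- sin t2 * cos (2*t2*x) + cos t2 * sin (2*t2*x) = - sin (2*t2*y)"
  proof -
    have "2*t2*y = t2 - 2*t2*x" by (simp add: y_def algebra_simps)
    then show ?thesis by (simp add: sin_diff)
  qed
  have r3: "sin t3 * cos (2*t3*x) - cos t3 * sin (2*t3*x) = sin (2*t3*y)"
  proof -
    have "2*t3*y = t3 - 2*t3*x" by (simp add: y_def algebra_simps)
    then show ?thesis by (simp add: sin_diff)
  qed
  have s2y: "sin (2*t2*y) > 0"
  proof (rule sin_gt_zero)
    show "0 < 2*t2*y" using y t2_bounds by simp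
    have "2*t2*y \<le> 2*t2*(1/2)" using y t2_bounds by (intro mult_left_mono) auto
    also have "2*t2*(1/2) = t2" by simp
    finally show "2*t2*y < pi" using t2(2) by (rule le_less_trans)
  qed
  have "- sin (2*t2*y) + mix * sin (2*t3*y) < 0"
  proof (cases "pi \<le> 2*t3*y")
    case True
    have "2*t3*y \<le> 2*t3*(1/2)" using y t3_bounds by (intro mult_left_mono) auto
    then have "2*t3*y \<le> t3" by simp
    then have "2*t3*y - pi \<le> pi" using t3(2) pi_gt_zero by linarith
    then have "sin (2*t3*y - pi) \<ge> 0" using True by (intro sin_ge_zero) auto
    then have "sin (2*t3*y) \<le> 0" by simp
    then have "mix * sin (2*t3*y) \<le> 0" using mix_pos by (simp add: mult_nonneg_nonpos)
    then show ?thesis using s2y by linarith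
  next
    case False
    have z: "0 < 2*t3*y" using y t3_bounds by simp
    have sz: "sin (2*t3*y) > 0" using z False by (intro sin_gt_zero) auto
    have "(t2/t3) * sin (2*t3*y) \<le> sin ((t2/t3) * (2*t3*y))"
      using t2_bounds t3_bounds t2 t3 z False by (intro sin_concave) auto
    also have "(t2/t3) * (2*t3*y) = 2*t2*y" using t3_bounds by simp
    finally have c: "(t2/t3) * sin (2*t3*y) \<le> sin (2*t2*y)" .
    have "1/2 \<le> t2/t3" using t3_lt_2t2 t3_bounds by (simp add: field_simps)
    then have "(1/2) * sin (2*t3*y) \<le> (t2/t3) * sin (2*t3*y)" using sz by (intro mult_right_mono) auto
    moreover have "mix * sin (2*t3*y) < (1/2) * sin (2*t3*y)" using mix_lt_half sz by simp
    ultimately show ?thesis using c by linarith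
  qed
  then show ?thesis unfolding r2 r3 by simp
qed

lemma cos_gap_le_sin:
  assumes x: "0 < x" "x \<le> eps"
  shows "cos (2*t2*x) - cos (2*t3*x) \<le> sin (2*t2*x)"
proof -
  have xe: "x \<le> 1/40" using x eps_le by simp
  have "cos (2*t2*x) - cos (2*t3*x) \<le> 1 - cos (2*t3*x)" by simp
  also have "\<dots> \<le> (2*t3*x)^2 / 2" by (rule one_minus_cos_le)
  also have "\<dots> \<le> 2 / pi * (2*t2*x)"
  proof -
    have "t3 \<le> 6" using t3 pi_less_4 by linarith
    then have "t3^2 \<le> 6^2" using t3_bounds by (intro power_mono) auto
    then have "t3^2 * x * pi \<le> 36 * (1/40) * 4"
      using xe x pi_less_4 by (intro mult_mono) auto
    also have "\<dots> < 2 * t2" using t2 pi_gt3 by linarith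
    finally have "(t3^2 * x * pi) * (2 * x / pi) \<le> (2 * t2) * (2 * x / pi)"
      using x pi_gt_zero by (intro mult_right_mono) auto
    then show ?thesis using pi_gt_zero by (simp add: power2_eq_square)
  qed
  also have "\<dots> \<le> sin (2*t2*x)"
  proof (rule jordan_ineq)
    have "2*t2*x \<le> 2*pi*(1/40)" using x xe t2 t2_bounds by (intro mult_mono) auto
    then show "2*t2*x \<le> pi/2" using pi_gt_zero by linarith
  qed (use x t2_bounds in simp)
  finally show ?thesis .
qed

lemma mix_neg_on_bridge:
  assumes x: "0 < x" "x \<le> eps"
  shows "(sin t2 * cos (2*t2*x) + cos t2 / real m * sin (2*t2*x)) +
         mix * (sin t3 * cos (2*t3*x) + cos t3 / real m * sin (2*t3*x)) < 0"
proof -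
  define D where "D = cos (2*t2*x) - cos (2*t3*x)"
  define C where "C = - cos t2 / real m"
  define S where "S = sin (2*t2*x)"
  have xe: "x \<le> 1/40" using x eps_le by simp
  have "(sin t2 * cos (2*t2*x) + cos t2 / real m * sin (2*t2*x)) +
      mix * (sin t3 * cos (2*t3*x) + cos t3 / real m * sin (2*t3*x)) =
      sin t2 * D - C * S + mix * (cos t3 / real m * sin (2*t3*x))"
  proof -
    have "mix * sin t3 = - sin t2" using mix_cancels_at_v2 by linarith
    then have "mix * (sin t3 * cos (2*t3*x)) = - sin t2 * cos (2*t3*x)"
      by (metis mult.assoc)
    then show ?thesis unfolding D_def C_def S_def distrib_left by (simp add: algebra_simps)
  qed
  moreover have "mix * (cos t3 / real m * sin (2*t3*x)) \<le> 0"
  proof -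
    have "2*t3*x \<le> 2*(3*pi/2)*(1/40)" using x xe t3 t3_bounds by (intro mult_mono) auto
    then have "0 < sin (2*t3*x)" using x t3_bounds pi_gt_zero by (intro sin_gt_zero) auto
    moreover have "cos t3 / real m < 0" using cos_t3_neg m_pos by (simp add: divide_neg_pos)
    ultimately show ?thesis using mix_pos by (intro mult_nonneg_nonpos mult_nonpos_nonneg) auto
  qed
  \<comment> \<open>the root condition \<open>anti_factor t\<^sub>2 = 0\<close> trades \<open>sin t\<^sub>2\<close> for \<open>C tan (eps t\<^sub>2) < C\<close>\<close>
  moreover have "sin t2 * D < C * S"
  proof -
    define c where "c = cos (eps*t2)"
    define s where "s = sin (eps*t2)"
    have root: "sin t2 * c = C * s"
      using anti_t2 m_pos unfolding anti_factor_def C_def c_def s_def by (simp add: field_simps)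
    have "s \<le> real m * s" using bridge_angle[OF t2_bounds] m_ge_1 by (simp add: s_def)
    then have "s < c" using m_sin_lt_cos[OF t2_bounds] unfolding s_def c_def by linarith
    have "0 < C" using cos_t2_neg m_pos unfolding C_def by (simp add: divide_neg_pos)
    have "0 < s" "0 < c" using bridge_angle[OF t2_bounds] unfolding s_def c_def by auto
    have "0 < S" unfolding S_def using x t2 pi_gt_zero xe
      by (intro sin_gt_zero) (auto intro: le_less_trans[OF mult_mono[of "2*t2" "2*pi" x "1/40"]])
    have "(sin t2 * D) * c = (C * s) * D" using root by (simp add: algebra_simps)
    also have "\<dots> \<le> (C * s) * S"
      using \<open>0 < C\<close> \<open>0 < s\<close> cos_gap_le_sin[OF x] by (simp add: D_def S_def)
    also have "\<dots> < (C * S) * c" using \<open>0 < C\<close> \<open>s < c\<close> \<open>0 < S\<close> by (simp add: algebra_simps)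
    finally show ?thesis using \<open>0 < c\<close> by (simp add: mult_less_cancel_right)
  qed
  ultimately show ?thesis by linarith
qed

lemma zero_points_mix:
  "zero_points m eps (\<lambda>j x. wave m eps (2*t2) j x + mix * wave m eps (2*t3) j x) = {V2}"
proof -
  note coeffs_t2 = wave_coeffs_at_anti_root[OF m_ge_1 anti_t2]
  note coeffs_t3 = wave_coeffs_at_sym_root[OF m_ge_1 sym_t3]
  have zero_v2: "wave m eps (2*t2) 0 (1/2) + mix * wave m eps (2*t3) 0 (1/2) = 0"
    using mix_cancels_at_v2 by (simp add: wave_e1)
  have on_e2: "wave m eps (2*t2) 1 x + mix * wave m eps (2*t3) 1 x < 0" if "0 \<le> x" "x < 1/2" for x
  proof -
    have "wave m eps (2*t2) 1 x + mix * wave m eps (2*t3) 1 x =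
        (- sin t2 * cos (2*t2*x) + cos t2 * sin (2*t2*x))
        + mix * (sin t3 * cos (2*t3*x) - cos t3 * sin (2*t3*x))"
      using wave_e2[of x m eps "2*t2"] wave_e2[of x m eps "2*t3"] coeffs_t2 coeffs_t3 that by simp
    then show ?thesis using mix_neg_on_e2[OF that] by simp
  qed
  have on_e1: "wave m eps (2*t2) 0 x + mix * wave m eps (2*t3) 0 x > 0" if "0 < x" "x < 1/2" for x
    using mix_pos_on_e1[OF that] that by (simp add: wave_e1)
  have on_bridge: "wave m eps (2*t2) j x + mix * wave m eps (2*t3) j x < 0"
    if "j \<in> {2..<m+2}" "0 < x" "x < eps" for j x
    using mix_neg_on_bridge[of x] that by (simp add: wave_bridge)
  show ?thesis
  proof (intro set_eqI iffI)
    fix p assume p: "p \<in> zero_points m eps (\<lambda>j x. wave m eps (2*t2) j x + mix * wave m eps (2*t3) j x)"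
    show "p \<in> {V2}"
    proof (cases p)
      case V3
      then show ?thesis using p on_e2[of 0] by (simp add: zero_points_def)
    next
      case (EdgePt j x)
      then have h: "is_edge m j" "0 < x" "x < edge_len eps j"
        "wave m eps (2*t2) j x + mix * wave m eps (2*t3) j x = 0"
        using p by (auto simp: zero_points_def)
      then have "is_edge m j \<and> x \<in> {0..edge_len eps j}" by simp
      then show ?thesis
        by (rule graph_pointE) (use h on_e1[of x] on_e2[of x] on_bridge[of j x] in \<open>auto simp: edge_len_def\<close>)
    qed simp
  qed (use zero_v2 in \<open>simp add: zero_points_def\<close>)
qed

lemma low_wave_eigen_fun:
  assumes "t \<in> {t1, t2, t3}"
  shows "eigen_fun m eps ((2*t)^2) (wave m eps (2*t))"
proof (rule wave_eigen_fun[OF m_ge_1 _ less_imp_le[OF eps_pos]])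
  show "secular m eps (2*t) = 0"
    using assms sym_t1 anti_t2 sym_t3 secular_factor[OF m_ge_1, of eps "2*t"] by auto
qed

lemma low_wave_nonzero:
  assumes "t \<in> {t1, t2, t3}"
  shows "wave m eps (2*t) \<noteq> (\<lambda>j x. 0)"
proof
  assume "wave m eps (2*t) = (\<lambda>j x. 0)"
  then have "sin t = 0" using wave_e1[of "1/2" m eps "2*t"] by simp
  moreover have "0 < sin t1" "0 < sin t2" "sin t3 < 0"
    using t1 pi_gt3 sin_t2_pos sin_t3_neg by (auto intro: sin_gt_zero)
  ultimately show False using assms by auto
qed

lemma low_eigen_fun_scaled_wave:
  assumes t: "0 < t" "t \<le> t3" and ef: "eigen_fun m eps ((2*t)^2) f"
  obtains c where "f = (\<lambda>j x. c * wave m eps (2*t) j x)" and "c \<noteq> 0 \<Longrightarrow> t \<in> {t1, t2, t3}"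
proof -
  have "0 < sin (2*t*eps)" using t t3 by (intro sin_bridge_pos) auto
  with eigen_fun_eq_scaled_wave[OF m_ge_1 eps_pos _ _ ef] t
  obtain c where "f = (\<lambda>j x. c * wave m eps (2*t) j x)" "c \<noteq> 0 \<Longrightarrow> secular m eps (2*t) = 0"
    by auto
  moreover have "secular m eps (2*t) = 0 \<Longrightarrow> t \<in> {t1, t2, t3}"
    using no_other_roots[OF t] secular_factor[OF m_ge_1, of eps "2*t"] by auto
  ultimately show ?thesis using that by blast
qed

lemma low_multiplicity:
  assumes "t \<in> {t1, t2, t3}"
  shows "multiplicity m eps ((2*t)^2) = 1"
proof (rule multiplicity_eq_1I[OF _ low_wave_eigen_fun[OF assms] low_wave_nonzero[OF assms]])
  fix f assume ef: "eigen_fun m eps ((2*t)^2) f"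
  have "0 < t" "t \<le> t3" using assms t1 t2 t3 by auto
  from low_eigen_fun_scaled_wave[OF this ef] show "\<exists>c. f = (\<lambda>j x. c * wave m eps (2*t) j x)"
    by blast
qed

lemma low_multiplicity_0:
  assumes "lam \<le> (2*t3)^2" and "lam \<notin> {(2*t1)^2, (2*t2)^2, (2*t3)^2}"
  shows "multiplicity m eps lam = 0"
proof (rule multiplicity_eq_0I)
  fix f assume ef: "eigen_fun m eps lam f"
  show "f = (\<lambda>j x. 0)"
  proof (cases "lam \<le> 0")
    case True
    then show ?thesis using eigen_fun_nonpos_eq_0[OF ef _ eps_pos] by simp
  next
    case False
    define t where "t = sqrt lam / 2"
    have lam: "lam = (2*t)^2" and "0 < t" using False by (simp_all add: t_def)
    moreover have "t \<le> t3"
    proof -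
      have "sqrt lam \<le> sqrt ((2*t3)^2)" using assms(1) by (rule real_sqrt_le_mono)
      also have "\<dots> = 2*t3" by (rule real_sqrt_unique) (use t3 pi_gt_zero in auto)
      finally show ?thesis by (simp add: t_def)
    qed
    ultimately obtain c where f: "f = (\<lambda>j x. c * wave m eps (2*t) j x)"
      and "c \<noteq> 0 \<Longrightarrow> t \<in> {t1, t2, t3}"
      using low_eigen_fun_scaled_wave ef by blast
    moreover have "t \<notin> {t1, t2, t3}" using assms(2) lam by auto
    ultimately show ?thesis by (cases "c = 0") auto
  qed
qed

lemma low_eigenvalues:
  "eigenvalue m eps 1 = (2*t1)^2" "eigenvalue m eps 2 = (2*t2)^2" "eigenvalue m eps 3 = (2*t3)^2"
proof -
  have order: "(2*t1)^2 < (2*t2)^2" "(2*t2)^2 < (2*t3)^2"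
    using t1 t2 t3 by (auto intro!: power_strict_mono)
  have "multiplicity m eps ((2*t1)^2) = 1" "multiplicity m eps ((2*t2)^2) = 1"
    "multiplicity m eps ((2*t3)^2) = 1"
    using low_multiplicity by auto
  from first_three_eigenvalues_eqI[OF order this low_multiplicity_0]
  show "eigenvalue m eps 1 = (2*t1)^2" "eigenvalue m eps 2 = (2*t2)^2" "eigenvalue m eps 3 = (2*t3)^2"
    by auto
qed

lemma first_three_waves:
  "first_three_eigenfunctions m eps (wave m eps (2*t1)) (wave m eps (2*t2)) (wave m eps (2*t3))"
proof -
  have "t1 < t2" "t2 < t3" using t1 t2 t3 by auto
  then have "(2*t1)^2 \<noteq> (2*t2)^2" "(2*t1)^2 \<noteq> (2*t3)^2" "(2*t2)^2 \<noteq> (2*t3)^2"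
    using t1 by (auto simp: power2_eq_iff)
  then show ?thesis
    unfolding first_three_eigenfunctions_def low_eigenvalues
    using low_wave_eigen_fun low_wave_nonzero
    by (auto intro!: eigen_fun_orthogonal[OF _ _ _ eps_pos])
qed

lemma second_plus_mix_third_one_zero:
  assumes "first_three_eigenfunctions m eps f1 f2 f3"
  shows "\<exists>b. num_zeros m eps (\<lambda>j x. f2 j x + b * f3 j x) = 1"
proof -
  have f2: "eigen_fun m eps ((2*t2)^2) f2" "f2 \<noteq> (\<lambda>j x. 0)"
    and f3: "eigen_fun m eps ((2*t3)^2) f3" "f3 \<noteq> (\<lambda>j x. 0)"
    using assms unfolding first_three_eigenfunctions_def low_eigenvalues by auto
  obtain c2 where c2: "f2 = (\<lambda>j x. c2 * wave m eps (2*t2) j x)"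
    using low_eigen_fun_scaled_wave[OF _ _ f2(1)] t2 t3 by auto
  obtain c3 where c3: "f3 = (\<lambda>j x. c3 * wave m eps (2*t3) j x)"
    using low_eigen_fun_scaled_wave[OF _ _ f3(1)] t3 pi_gt_zero by auto
  have "c2 \<noteq> 0" "c3 \<noteq> 0" using c2 c3 f2(2) f3(2) by auto
  then have "(\<lambda>j x. f2 j x + (mix * c2 / c3) * f3 j x) =
      (\<lambda>j x. c2 * (wave m eps (2*t2) j x + mix * wave m eps (2*t3) j x))"
    unfolding c2 c3 by (simp add: algebra_simps)
  then have "num_zeros m eps (\<lambda>j x. f2 j x + (mix * c2 / c3) * f3 j x) = 1"
    using \<open>c2 \<noteq> 0\<close> by (simp add: num_zeros_def zero_points_scale zero_points_mix)
  then show ?thesis by blast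
qed

end

theorem lemma19:
  fixes m :: nat
  assumes "m \<ge> 1"
  shows "\<exists>eps > 0.
           (\<exists>f1 f2 f3. first_three_eigenfunctions m eps f1 f2 f3) \<and>
           (\<forall>f1 f2 f3. first_three_eigenfunctions m eps f1 f2 f3 \<longrightarrow>
              (\<exists>b :: real. num_zeros m eps (\<lambda>j x. f2 j x + b * f3 j x) = 1))"
proof -
  define eps where "eps = 1 / (40 * real m)"
  have "thin_bridge m eps" using assms by unfold_locales (auto simp: eps_def)
  then obtain t1 t2 t3 where "low_modes m eps t1 t2 t3" by (rule thin_bridge.secular_roots)
  then interpret low_modes m eps t1 t2 t3 .
  show ?thesis using eps_pos first_three_waves second_plus_mix_third_one_zero by blast
qed

end
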